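(* Let $(X,d_X)$ be a metric space and $C\in(0,\infty)$. Then $\Delta_X^{(c)}(R)\leq CR$ for all $R\in[0,\infty)$ if and only if $\Delta_X^{(u)}(r)\geq\frac1C r$ for all $r>0$.
   Context: For a cover $\mathcal{U}$ of $X$: $\mathrm{diam}(\mathcal{U})=\sup_{U\in\mathcal{U}}\mathrm{diam}(U)$; $\mathcal{L}(\mathcal{U})=\sup\{d\in[0,\infty): \text{every } E\subseteq X \text{ with } \mathrm{diam}(E)<d \text{ is contained in some } U\in\mathcal{U}\}$; point-finite means each point lies in only finitely many members. $\Delta_X^{(u)}(r)=\sup\{\mathcal{L}(\mathcal{U}): \mathcal{U} \text{ point-finite cover of } X,\ \mathrm{diam}(\mathcal{U})\leq r\}$, $\Delta_X^{(c)}(R)=\inf\{\mathrm{diam}(\mathcal{U}): \mathcal{U} \text{ point-finite cover of } X,\ \mathcal{L}(\mathcal{U})\geq R\}$. *)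

theory Defs
  imports "HOL-Analysis.Analysis"
begin

definition ediam :: "('a \<Rightarrow> 'a \<Rightarrow> real) \<Rightarrow> 'a set \<Rightarrow> ereal" where
  "ediam d E = Sup (insert 0 {ereal (d x y) | x y. x \<in> E \<and> y \<in> E})"

definition cover_diam :: "('a \<Rightarrow> 'a \<Rightarrow> real) \<Rightarrow> 'a set set \<Rightarrow> ereal" where
  "cover_diam d \<U> = Sup (insert 0 (ediam d ` \<U>))"

definition lebesgue_num :: "'a set \<Rightarrow> ('a \<Rightarrow> 'a \<Rightarrow> real) \<Rightarrow> 'a set set \<Rightarrow> ereal" where
  "lebesgue_num M d \<U> = Sup {ereal t | t. 0 \<le> t \<and>
      (\<forall>E. E \<subseteq> M \<and> ediam d E < ereal t \<longrightarrow> (\<exists>U\<in>\<U>. E \<subseteq> U))}"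

definition is_cover :: "'a set \<Rightarrow> 'a set set \<Rightarrow> bool" where
  "is_cover M \<U> \<longleftrightarrow> (\<forall>U\<in>\<U>. U \<subseteq> M) \<and> \<Union>\<U> = M"

definition point_finite :: "'a set \<Rightarrow> 'a set set \<Rightarrow> bool" where
  "point_finite M \<U> \<longleftrightarrow> (\<forall>x\<in>M. finite {U\<in>\<U>. x \<in> U})"

definition Delta_u :: "'a set \<Rightarrow> ('a \<Rightarrow> 'a \<Rightarrow> real) \<Rightarrow> real \<Rightarrow> ereal" where
  "Delta_u M d r = Sup {lebesgue_num M d \<U> | \<U>.
      is_cover M \<U> \<and> point_finite M \<U> \<and> cover_diam d \<U> \<le> ereal r}"

definition Delta_c :: "'a set \<Rightarrow> ('a \<Rightarrow> 'a \<Rightarrow> real) \<Rightarrow> real \<Rightarrow> ereal" where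
  "Delta_c M d R = Inf {cover_diam d \<U> | \<U>.
      is_cover M \<U> \<and> point_finite M \<U> \<and> lebesgue_num M d \<U> \<ge> ereal R}"

end

theory Submission
  imports Defs
begin

text \<open>The two profiles are dual to each other: a cover witnessing a small value of
  \<open>Delta_c\<close> witnesses a large value of \<open>Delta_u\<close> and vice versa. The linear bounds
  then translate into each other by approximating \<open>r / C\<close> from below (resp. \<open>C * R\<close>
  from above). No property of \<open>d\<close> is needed.\<close>

lemma Delta_u_ge_if_Delta_c_less:
  assumes "Delta_c M d R < ereal r"
  shows "ereal R \<le> Delta_u M d r"
proof -
  obtain \<U> where \<U>: "is_cover M \<U>" "point_finite M \<U>" "ereal R \<le> lebesgue_num M d \<U>"
    "cover_diam d \<U> < ereal r"
    using assms unfolding Delta_c_def by (auto simp: Inf_less_iff)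
  then have "lebesgue_num M d \<U> \<le> Delta_u M d r"
    unfolding Delta_u_def by (intro Sup_upper) auto
  with \<U>(3) show ?thesis by simp
qed

lemma Delta_c_le_if_Delta_u_greater:
  assumes "ereal R < Delta_u M d r"
  shows "Delta_c M d R \<le> ereal r"
proof -
  obtain \<U> where \<U>: "is_cover M \<U>" "point_finite M \<U>" "ereal R < lebesgue_num M d \<U>"
    "cover_diam d \<U> \<le> ereal r"
    using assms unfolding Delta_u_def by (auto simp: less_Sup_iff)
  then have "Delta_c M d R \<le> cover_diam d \<U>"
    unfolding Delta_c_def by (intro Inf_lower) auto
  with \<U>(4) show ?thesis by simp
qed

lemma Delta_u_linear_lower_bound:
  assumes "0 < C" and Delta_c_bound: "\<forall>R\<ge>0. Delta_c M d R \<le> ereal (C * R)" and "0 < r"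
  shows "ereal (r / C) \<le> Delta_u M d r"
proof -
  have "ereal 0 < ereal (r / C)" using assms by simp
  then show ?thesis
  proof (rule dense_le_bounded)
    fix w assume "ereal 0 < w" "w < ereal (r / C)"
    then obtain R where w: "w = ereal R" and "0 < R" "C * R < r"
      using \<open>0 < C\<close> by (cases w) (auto simp: field_simps)
    then have "Delta_c M d R < ereal r"
      using Delta_c_bound order.strict_trans1[of "Delta_c M d R" "ereal (C * R)" "ereal r"] by simp
    then show "w \<le> Delta_u M d r"
      unfolding w by (rule Delta_u_ge_if_Delta_c_less)
  qed
qed

lemma Delta_c_linear_upper_bound:
  assumes "0 < C" and Delta_u_bound: "\<forall>r>0. ereal (r / C) \<le> Delta_u M d r" and "0 \<le> R"
  shows "Delta_c M d R \<le> ereal (C * R)"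
proof -
  have "ereal (C * R) < \<infinity>" by simp
  then show ?thesis
  proof (rule dense_ge_bounded)
    fix w assume "ereal (C * R) < w" "w < \<infinity>"
    then obtain r where w: "w = ereal r" and "C * R < r" by (cases w) auto
    moreover have "0 \<le> C * R" using assms by simp
    ultimately have "0 < r" and "R < r / C" using \<open>0 < C\<close> by (auto simp: field_simps)
    then have "ereal R < Delta_u M d r"
      using Delta_u_bound order.strict_trans2[of "ereal R" "ereal (r / C)" "Delta_u M d r"] by simp
    then show "Delta_c M d R \<le> w"
      unfolding w by (rule Delta_c_le_if_Delta_u_greater)
  qed
qed

theorem lemma3p6:
  fixes M :: "'a set" and d :: "'a \<Rightarrow> 'a \<Rightarrow> real" and C :: real
  assumes "Metric_space M d" and "0 < C"
  shows "(\<forall>R\<ge>0. Delta_c M d R \<le> ereal (C * R))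
     \<longleftrightarrow> (\<forall>r>0. Delta_u M d r \<ge> ereal (r / C))"
  using Delta_u_linear_lower_bound[OF \<open>0 < C\<close>] Delta_c_linear_upper_bound[OF \<open>0 < C\<close>]
  by blast

end
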